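(* Let $\mathrm{ocDAG}$ be the set of all ordered connected directed acyclic graphs, and let $\mathrm{ocROUTING} = \{\mathrm{routing}(\vec{G})\}_{\vec{G}\in\mathrm{ocDAG}}$. The unitary router $$\mathrm{router}: \mathrm{ocDAG} \rightarrow \mathrm{ocROUTING},\qquad \vec{G}\mapsto \mathrm{routing}(\vec{G})$$ is a bijection.
   Context: A topological ordering of a directed graph $G=(V,E)$ is a bijection $o: V\to\{1,\dots,|V|\}$ such that for every directed edge $(v_j,v_k)\in E$ one has $o(v_j)<o(v_k)$; a directed graph is acyclic (a DAG) iff it admits a topological ordering. An ordered DAG is a DAG $(V,E)$ with $V=\{1,\dots,|V|\}$ such that the identity map $j\mapsto j$ is a topological ordering. For a DAG $G=(V,E)$ with topological ordering $o$, the induced ordered DAG is $\vec{G}^{(o)} = (\{o(v)\,|\,v\in V\},\{(o(v_j),o(v_k))\,|\,(v_j,v_k)\in E\})$. $\mathrm{ocDAG}$ denotes the set of all ordered and connected DAGs. For a graph $G=(V,E)$ and vertex $v$, the parents are $P_G(v)=\{w\in V\,|\,(w,v)\in E\}$ and the children are $C_G(v)=\{w\in V\,|\,(v,w)\in E\}$. An ECM graph is a connected DAG $G=(V,E)$ whose vertices are partitioned into percepts $\mathcal{S}=\{v\,|\,P_G(v)=\emptyset\}$, actions $\mathcal{A}=\{v\,|\,C_G(v)=\emptyset\}$, and intermediate clips $\mathcal{C}=V\setminus(\mathcal{S}\cup\mathcal{A})$. Given an ECM graph $G=(V,E)$ with topological ordering $o$, a unitary route of $\vec{G}^{(o)}$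 is a sequence of $|V|\times|V|$ unitary matrices $(U^{o(v)})_{v\in\mathcal{C}\cup\mathcal{A}}$, ordered by ascending superscript, whose entries are $U^i_{jk}=u^i_{jk}$ if $j,k\in\{i\}\cup P_{\vec{G}^{(o)}}(i)$ and $U^i_{jk}=\delta_{jk}$ otherwise, where the complex numbers $u^i_{jk}$ are arbitrary subject only to $U^i$ being unitary. The unitary routing $\mathrm{routing}(\vec{G}^{(o)})$ is the set of all unitary routes of $\vec{G}^{(o)}$ (obtained from all admissible choices of the coefficients $u^i_{jk}$). *)

theory Defs
  imports "Jordan_Normal_Form.Schur_Decomposition"
begin

text \<open>An ordered DAG is represented by a pair (n, E): its vertex set is {1..n}
  and E is its edge set; the identity is a topological ordering, i.e. every
  edge (j,k) satisfies j < k.\<close>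

type_synonym odag = "nat \<times> (nat \<times> nat) set"

definition verts :: "odag \<Rightarrow> nat set" where
  "verts G = {1..fst G}"

definition edges :: "odag \<Rightarrow> (nat \<times> nat) set" where
  "edges G = snd G"

definition ordered_dag :: "odag \<Rightarrow> bool" where
  "ordered_dag G \<longleftrightarrow> edges G \<subseteq> verts G \<times> verts G \<and>
     (\<forall>(j,k) \<in> edges G. j < k)"

definition connected_graph :: "odag \<Rightarrow> bool" where
  "connected_graph G \<longleftrightarrow> verts G \<noteq> {} \<and>
     (\<forall>u \<in> verts G. \<forall>v \<in> verts G. (u, v) \<in> (edges G \<union> (edges G)\<inverse>)\<^sup>*)"

definition ocDAG :: "odag set" where
  "ocDAG = {G. ordered_dag G \<and> connected_graph G}"

definition parents :: "odag \<Rightarrow> nat \<Rightarrow> nat set" where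
  "parents G v = {w \<in> verts G. (w, v) \<in> edges G}"

definition children :: "odag \<Rightarrow> nat \<Rightarrow> nat set" where
  "children G v = {w \<in> verts G. (v, w) \<in> edges G}"

definition percepts :: "odag \<Rightarrow> nat set" where
  "percepts G = {v \<in> verts G. parents G v = {}}"

definition actions :: "odag \<Rightarrow> nat set" where
  "actions G = {v \<in> verts G. children G v = {}}"

definition clips :: "odag \<Rightarrow> nat set" where
  "clips G = verts G - (percepts G \<union> actions G)"

definition unitary_mat :: "nat \<Rightarrow> complex mat \<Rightarrow> bool" where
  "unitary_mat n U \<longleftrightarrow> U \<in> carrier_mat n n \<and> U * mat_adjoint U = 1\<^sub>m n"

text \<open>Vertices are 1..n, matrix indices are 0..n-1; entry (j,k) of the paper
  is entry (j-1,k-1) here.\<close>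
definition admissible_unitary :: "odag \<Rightarrow> nat \<Rightarrow> complex mat \<Rightarrow> bool" where
  "admissible_unitary G i U \<longleftrightarrow> unitary_mat (fst G) U \<and>
     (\<forall>j \<in> verts G. \<forall>k \<in> verts G.
        \<not> (j \<in> insert i (parents G i) \<and> k \<in> insert i (parents G i)) \<longrightarrow>
        U $$ (j - 1, k - 1) = (if j = k then 1 else 0))"

definition routing :: "odag \<Rightarrow> complex mat list set" where
  "routing G = {Us. let I = sorted_list_of_set (clips G \<union> actions G) in
      length Us = length I \<and>
      (\<forall>t < length I. admissible_unitary G (I ! t) (Us ! t))}"

definition ocROUTING :: "complex mat list set set" where
  "ocROUTING = routing ` ocDAG"

end

theory Submission
  imports Defs
begin

text \<open>The router is surjective by definition of ocROUTING, so the content is injectivity: the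
  graph can be read off its routing.  The size n is the dimension of the matrices (routes are
  nonempty, since the last vertex is an action).  For the t-th vertex i of C \<union> A, the set of
  positions j at which some route has a diagonal entry different from 1 is exactly {i} \<union> P(i):
  outside it every admissible matrix is the identity, and inside it the diagonal matrix with -1
  at j and 1 elsewhere is admissible.  Since the ordering is topological, i is the largest
  element of this set, and the edges into i are the pairs (w, i) with w another element of it.
  Every edge target lies in C \<union> A, so all edges are recovered.\<close>

lemma mat_adjoint_mat_diag: "mat_adjoint (mat_diag n f) = mat_diag n (\<lambda>i. cnj (f i))"
  by (rule eq_matI) (auto simp: mat_adjoint_def mat_diag_def mat_of_rows_index)

lemma mat_diag_cong: "(\<And>i. i < n \<Longrightarrow> f i = g i) \<Longrightarrow> mat_diag n f = mat_diag n g"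
  by (rule eq_matI) (auto simp: mat_diag_def)

lemma unitary_mat_diag:
  assumes "\<And>i. i < n \<Longrightarrow> f i * cnj (f i) = 1"
  shows "unitary_mat n (mat_diag n f)"
proof -
  have "mat_diag n f * mat_adjoint (mat_diag n f) = mat_diag n (\<lambda>i. f i * cnj (f i))"
    by (simp add: mat_adjoint_mat_diag)
  also have "\<dots> = 1\<^sub>m n"
    using assms by (simp add: mat_diag_cong[of n _ "\<lambda>_. 1"])
  finally show ?thesis
    unfolding unitary_mat_def by simp
qed

lemma parents_less: "ordered_dag G \<Longrightarrow> w \<in> parents G i \<Longrightarrow> w < i"
  by (auto simp: ordered_dag_def parents_def)

lemma ocDAG_last_vertex_action: "G \<in> ocDAG \<Longrightarrow> fst G \<in> actions G"
  by (fastforce simp: ocDAG_def ordered_dag_def connected_graph_def actions_def children_def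
      verts_def)

definition route_vertices :: "odag \<Rightarrow> nat list" where
  "route_vertices G = sorted_list_of_set (clips G \<union> actions G)"

lemma set_route_vertices: "set (route_vertices G) = clips G \<union> actions G"
proof -
  have "finite (clips G \<union> actions G)"
    by (rule finite_subset[of _ "verts G"]) (auto simp: clips_def actions_def verts_def)
  then show ?thesis
    unfolding route_vertices_def by simp
qed

lemma route_vertices_verts:
  assumes "t < length (route_vertices G)"
  shows "route_vertices G ! t \<in> verts G"
proof -
  have "route_vertices G ! t \<in> clips G \<union> actions G"
    using nth_mem[OF assms] by (simp only: set_route_vertices)
  then show ?thesis
    by (auto simp: clips_def actions_def)
qed

lemma routing_iff:
  "Us \<in> routing G \<longleftrightarrow> length Us = length (route_vertices G) \<and>
     (\<forall>t < length Us. admissible_unitary G (route_vertices G ! t) (Us ! t))"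
  unfolding routing_def route_vertices_def Let_def by auto

lemma admissible_unitary_carrier:
  "admissible_unitary G i U \<Longrightarrow> U \<in> carrier_mat (fst G) (fst G)"
  unfolding admissible_unitary_def unitary_mat_def by blast

lemma admissible_unitary_diag_outside:
  assumes "admissible_unitary G i U" "j \<in> verts G" "j \<notin> insert i (parents G i)"
  shows "U $$ (j - 1, j - 1) = 1"
  using assms unfolding admissible_unitary_def by force

lemma admissible_unitary_mat_diag:
  assumes "\<And>a. a < fst G \<Longrightarrow> f a * cnj (f a) = 1"
    and "\<And>j. j \<in> verts G \<Longrightarrow> j \<notin> insert i (parents G i) \<Longrightarrow> f (j - 1) = 1"
  shows "admissible_unitary G i (mat_diag (fst G) f)"
  using assms unitary_mat_diag[of "fst G" f]
  by (auto simp: admissible_unitary_def mat_diag_def verts_def)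

lemma identity_route: "replicate (length (route_vertices G)) (1\<^sub>m (fst G)) \<in> routing G"
  using admissible_unitary_mat_diag[of G "\<lambda>_. 1"] by (simp add: routing_iff)

definition route_support :: "complex mat list set \<Rightarrow> nat \<Rightarrow> nat set" where
  "route_support R t = {j. 1 \<le> j \<and>
     (\<exists>Us\<in>R. t < length Us \<and> j \<le> dim_row (Us ! t) \<and> Us ! t $$ (j - 1, j - 1) \<noteq> 1)}"

definition routing_edges :: "complex mat list set \<Rightarrow> (nat \<times> nat) set" where
  "routing_edges R = {(w, i). w < i \<and> (\<exists>t. (\<exists>Us\<in>R. t < length Us) \<and>
     w \<in> route_support R t \<and> i \<in> route_support R t \<and> (\<forall>j \<in> route_support R t. j \<le> i))}"

definition graph_of_routing :: "complex mat list set \<Rightarrow> odag" where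
  "graph_of_routing R = (dim_row (hd (SOME Us. Us \<in> R)), routing_edges R)"

lemma route_support_routing:
  assumes t: "t < length (route_vertices G)"
  shows "route_support (routing G) t = insert (route_vertices G ! t) (parents G (route_vertices G ! t))"
    (is "_ = ?S")
proof
  show "route_support (routing G) t \<subseteq> ?S"
  proof
    fix j assume "j \<in> route_support (routing G) t"
    then obtain Us where "1 \<le> j" "Us \<in> routing G" "j \<le> dim_row (Us ! t)"
      and diag: "Us ! t $$ (j - 1, j - 1) \<noteq> 1"
      by (auto simp: route_support_def)
    moreover have adm: "admissible_unitary G (route_vertices G ! t) (Us ! t)"
      using \<open>Us \<in> routing G\<close> t by (simp add: routing_iff)
    ultimately have "j \<in> verts G"
      using admissible_unitary_carrier by (fastforce simp: verts_def)
    with adm diag show "j \<in> ?S"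
      using admissible_unitary_diag_outside by blast
  qed
next
  show "?S \<subseteq> route_support (routing G) t"
  proof
    fix j assume j: "j \<in> ?S"
    then have "j \<in> verts G"
      using route_vertices_verts[OF t] by (auto simp: parents_def)
    define flip where "flip = mat_diag (fst G) (\<lambda>a. if a = j - 1 then -1 else 1 :: complex)"
    define Us where "Us = (replicate (length (route_vertices G)) (1\<^sub>m (fst G)))[t := flip]"
    have "admissible_unitary G (route_vertices G ! t) flip"
      unfolding flip_def using j \<open>j \<in> verts G\<close>
      by (intro admissible_unitary_mat_diag) (auto simp: verts_def eq_diff_iff)
    then have "Us \<in> routing G"
      using identity_route[of G] t by (auto simp: Us_def routing_iff nth_list_update)
    moreover have "t < length Us" "Us ! t = flip"
      using t by (simp_all add: Us_def)
    moreover have "1 \<le> j" "j \<le> dim_row flip" "flip $$ (j - 1, j - 1) \<noteq> 1"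
      using \<open>j \<in> verts G\<close> by (auto simp: flip_def mat_diag_def verts_def)
    ultimately show "j \<in> route_support (routing G) t"
      unfolding route_support_def by (metis (mono_tags, lifting) mem_Collect_eq)
  qed
qed

lemma routing_edges_routing:
  assumes G: "ordered_dag G"
  shows "routing_edges (routing G) = edges G"
proof -
  let ?I = "route_vertices G"
  have support_max: "j \<le> ?I ! t" if "j \<in> insert (?I ! t) (parents G (?I ! t))" for j t
    using that parents_less[OF G] by fastforce
  have "(w, i) \<in> routing_edges (routing G) \<longleftrightarrow> (w, i) \<in> edges G" for w i
  proof
    assume "(w, i) \<in> routing_edges (routing G)"
    then obtain t Us where "w < i" "Us \<in> routing G" "t < length Us"
      and "w \<in> route_support (routing G) t" "i \<in> route_support (routing G) t"
      and "\<forall>j \<in> route_support (routing G) t. j \<le> i"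
      by (auto simp: routing_edges_def)
    moreover have t: "t < length ?I"
      using \<open>Us \<in> routing G\<close> \<open>t < length Us\<close> by (simp add: routing_iff)
    ultimately have "i = ?I ! t" "w \<in> parents G (?I ! t)"
      using support_max[of i t] by (auto simp: route_support_routing[OF t])
    then show "(w, i) \<in> edges G"
      by (simp add: parents_def)
  next
    assume "(w, i) \<in> edges G"
    then have "w \<in> parents G i" "w < i" "i \<in> verts G"
      using G by (auto simp: parents_def ordered_dag_def)
    then have "i \<in> set ?I"
      by (auto simp: set_route_vertices clips_def percepts_def)
    then obtain t where t: "t < length ?I" and "?I ! t = i"
      by (auto simp: in_set_conv_nth)
    have "\<exists>Us \<in> routing G. t < length Us"
      using identity_route[of G] t by force
    moreover have "w \<in> route_support (routing G) t" "i \<in> route_support (routing G) t"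
      "\<forall>j \<in> route_support (routing G) t. j \<le> i"
      using \<open>?I ! t = i\<close> \<open>w \<in> parents G i\<close> support_max[of _ t]
      by (auto simp: route_support_routing[OF t])
    ultimately show "(w, i) \<in> routing_edges (routing G)"
      using \<open>w < i\<close> unfolding routing_edges_def by blast
  qed
  then show ?thesis
    by auto
qed

lemma graph_of_routing_routing:
  assumes G: "G \<in> ocDAG"
  shows "graph_of_routing (routing G) = G"
proof -
  define U0 where "U0 = (SOME Us. Us \<in> routing G)"
  have "U0 \<in> routing G"
    unfolding U0_def using identity_route by (rule someI)
  then have "length U0 = length (route_vertices G)"
    and adm: "\<forall>t < length U0. admissible_unitary G (route_vertices G ! t) (U0 ! t)"
    unfolding routing_iff by blast+
  moreover have "route_vertices G \<noteq> []"
    using ocDAG_last_vertex_action[OF G] set_route_vertices[of G] by auto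
  ultimately have "U0 \<noteq> []"
    by (metis length_0_conv)
  then have "admissible_unitary G (route_vertices G ! 0) (U0 ! 0)"
    using adm by blast
  with \<open>U0 \<noteq> []\<close> have "dim_row (hd U0) = fst G"
    using admissible_unitary_carrier by (metis carrier_matD(1) hd_conv_nth)
  moreover have "routing_edges (routing G) = edges G"
    using G by (simp add: ocDAG_def routing_edges_routing)
  ultimately show ?thesis
    by (simp add: graph_of_routing_def U0_def edges_def)
qed

theorem lemma1:
  shows "bij_betw routing ocDAG ocROUTING"
  unfolding bij_betw_def ocROUTING_def
  using inj_on_inverseI[of ocDAG graph_of_routing routing] graph_of_routing_routing by blast

end
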